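(* In the replace-after-fixed-time process with parameters $\lambda>0$, $r>0$, for every $t>0$ the random variable $D(t)$ has the Poisson distribution with mean $\lambda t$, i.e. $\Pr(D(t)=l)=e^{-\lambda t}(\lambda t)^l/l!$ for $l=0,1,2,\ldots$.
   Context: Let $X_1,X_2,\ldots$ be independent random variables, each exponentially distributed with rate $\lambda>0$ (density $\lambda e^{-\lambda x}$ for $x>0$). Fix $r>0$ and set $Y_k=\min(X_k,r)$. For $t\ge 0$ let $N(t)=\max\{n\ge 0:\sum_{k=1}^n Y_k\le t\}$ (the replace-after-fixed-time, or RaFT, process). Write $N(t)=A(t)+D(t)$, where $A(t)=\#\{k\le N(t): X_k>r\}$ (components replaced while still functioning) and $D(t)=\#\{k\le N(t): X_k\le r\}$ (components replaced because they failed). *)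

theory Defs
  imports "HOL-Probability.Probability"
begin

text \<open>RaFT process driven by a sample path x 1, x 2, ... of lifetimes (index 0 unused).\<close>

definition raft_Y :: "(nat \<Rightarrow> real) \<Rightarrow> real \<Rightarrow> nat \<Rightarrow> real" where
  "raft_Y x r k = min (x k) r"

definition raft_N :: "(nat \<Rightarrow> real) \<Rightarrow> real \<Rightarrow> real \<Rightarrow> nat" where
  "raft_N x r t = (GREATEST n. (\<Sum>k=1..n. raft_Y x r k) \<le> t)"

definition raft_A :: "(nat \<Rightarrow> real) \<Rightarrow> real \<Rightarrow> real \<Rightarrow> nat" where
  "raft_A x r t = card {k \<in> {1..raft_N x r t}. x k > r}"

definition raft_D :: "(nat \<Rightarrow> real) \<Rightarrow> real \<Rightarrow> real \<Rightarrow> nat" where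
  "raft_D x r t = card {k \<in> {1..raft_N x r t}. x k \<le> r}"

end

theory Submission
  imports Defs
begin

text \<open>Condition on the first lifetime a. If a < min t r the component fails, which counts one
  failure and restarts the process with horizon t - a; if r < a and r \<le> t it is replaced at time r
  and the process restarts with horizon t - r; if t < a and t < r nothing happens before t.
  Hence Q l t = P(D(t) = l) satisfies a renewal equation, and by memorylessness the Poisson
  probabilities p l t = exp(-lam t) (lam t)^l / l! solve it: with m = min t r,
  exp(-lam m) p l (t - m) + (integral over 0 < a < m of lam exp(-lam a) p (l - 1) (t - a)) = p l t.
  Induction on l and on the number of periods of length r in t gives Q = p.
  The lifetimes are realised as a stream of i.i.d. exponentials, where conditioning on the first
  lifetime is disintegration of the stream measure.\<close>

definition raft_S :: "(nat \<Rightarrow> real) \<Rightarrow> real \<Rightarrow> nat \<Rightarrow> real" where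
  "raft_S x r n = (\<Sum>k=1..n. raft_Y x r k)"

definition raft_nonneg :: "(nat \<Rightarrow> real) \<Rightarrow> bool" where
  "raft_nonneg x \<longleftrightarrow> (\<forall>k\<ge>1. 0 \<le> x k)"

text \<open>On regular paths the maximum in raft_N exists; otherwise raft_N is an unspecified
  GREATEST-value. Regularity holds almost surely.\<close>
definition raft_regular :: "(nat \<Rightarrow> real) \<Rightarrow> real \<Rightarrow> real \<Rightarrow> bool" where
  "raft_regular x r t \<longleftrightarrow> raft_nonneg x \<and> (\<exists>n. t < raft_S x r n)"

definition raft_event :: "(nat \<Rightarrow> real) \<Rightarrow> real \<Rightarrow> real \<Rightarrow> nat \<Rightarrow> bool" where
  "raft_event x r t l \<longleftrightarrow> raft_regular x r t \<and> raft_D x r t = l"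

lemma raft_S_0 [simp]: "raft_S x r 0 = 0"
  by (simp add: raft_S_def)

lemma raft_S_Suc: "raft_S x r (Suc n) = raft_S x r n + min (x (Suc n)) r"
  by (simp add: raft_S_def raft_Y_def)

lemma raft_S_Suc_shift: "raft_S x r (Suc n) = min (x 1) r + raft_S (\<lambda>k. x (Suc k)) r n"
  by (induction n) (simp_all add: raft_S_Suc)

lemma raft_S_mono:
  assumes "raft_nonneg x" "0 \<le> r" "m \<le> n"
  shows "raft_S x r m \<le> raft_S x r n"
  using assms(3)
proof (induction n rule: dec_induct)
  case (step n)
  have "0 \<le> min (x (Suc n)) r"
    using assms(1,2) by (simp add: raft_nonneg_def)
  with step.IH show ?case
    by (simp add: raft_S_Suc add_increasing2)
qed simp

lemma raft_N_eqI:
  assumes "raft_nonneg x" "0 \<le> r" "raft_S x r n \<le> t" "t < raft_S x r (Suc n)"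
  shows "raft_N x r t = n"
  unfolding raft_N_def raft_S_def[symmetric]
proof (rule Greatest_equality)
  fix m
  assume "raft_S x r m \<le> t"
  with assms show "m \<le> n"
    using raft_S_mono[of x r "Suc n" m] by (metis not_less_eq_eq not_le order.trans)
qed (fact assms(3))

lemma raft_S_bracket:
  assumes "0 \<le> t" "t < raft_S x r n"
  obtains j where "raft_S x r j \<le> t" "t < raft_S x r (Suc j)"
proof -
  define k where "k = (LEAST n. t < raft_S x r n)"
  have k: "t < raft_S x r k"
    unfolding k_def by (rule LeastI) (fact assms(2))
  then obtain j where j: "k = Suc j"
    using assms(1) by (cases k) auto
  then have "\<not> t < raft_S x r j"
    using not_less_Least[of j "\<lambda>n. t < raft_S x r n"] unfolding k_def by simp
  with k j show ?thesis
    by (intro that) auto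
qed

lemma card_filter_atLeastAtMost_Suc:
  "card {k \<in> {1..Suc n}. P k} = of_bool (P 1) + card {k \<in> {1..n}. P (Suc k)}"
proof -
  have "{1..Suc n} = insert 1 (Suc ` {1..n})"
    by (simp add: image_Suc_atLeastAtMost atLeastAtMost_insertL)
  then have "{k \<in> {1..Suc n}. P k} = {k \<in> {1}. P k} \<union> Suc ` {k \<in> {1..n}. P (Suc k)}"
    by blast
  also have "card \<dots> = card {k \<in> {1}. P k} + card (Suc ` {k \<in> {1..n}. P (Suc k)})"
    by (rule card_Un_disjoint) auto
  also have "card {k \<in> {1::nat}. P k} = of_bool (P 1)"
    by (simp add: Collect_conj_eq)
  finally show ?thesis
    by (simp add: card_image)
qed

lemma raft_S_cong: "(\<And>k. 1 \<le> k \<Longrightarrow> x k = x' k) \<Longrightarrow> raft_S x r n = raft_S x' r n"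
  unfolding raft_S_def raft_Y_def by (intro sum.cong) auto

lemma raft_D_cong:
  assumes "\<And>k. 1 \<le> k \<Longrightarrow> x k = x' k"
  shows "raft_D x r t = raft_D x' r t"
proof -
  have "raft_S x r n = raft_S x' r n" for n
    using assms by (rule raft_S_cong)
  then have "raft_N x r t = raft_N x' r t"
    by (simp add: raft_N_def raft_S_def)
  with assms show ?thesis
    unfolding raft_D_def by (intro arg_cong[where f = card]) auto
qed

lemma raft_event_cong:
  assumes "\<And>k. 1 \<le> k \<Longrightarrow> x k = x' k"
  shows "raft_event x r t l = raft_event x' r t l"
proof -
  have "raft_S x r n = raft_S x' r n" for n
    using assms by (rule raft_S_cong)
  with assms raft_D_cong[OF assms] show ?thesis
    by (simp add: raft_event_def raft_regular_def raft_nonneg_def)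
qed

lemma raft_nonneg_shift: "raft_nonneg x \<longleftrightarrow> 0 \<le> x 1 \<and> raft_nonneg (\<lambda>k. x (Suc k))"
  unfolding raft_nonneg_def
proof (intro iffI conjI allI impI)
  fix k :: nat
  assume shifted: "0 \<le> x 1 \<and> (\<forall>k\<ge>1. 0 \<le> x (Suc k))" and "1 \<le> k"
  show "0 \<le> x k"
  proof (cases "k = 1")
    case False
    then obtain j where "k = Suc j" "1 \<le> j"
      using \<open>1 \<le> k\<close> by (cases k) auto
    with shifted show ?thesis
      by simp
  qed (use shifted in simp)
qed simp_all

lemma raft_regular_shift:
  assumes "0 \<le> x 1" "0 \<le> r" "min (x 1) r \<le> t"
  shows "raft_regular x r t \<longleftrightarrow> raft_regular (\<lambda>k. x (Suc k)) r (t - min (x 1) r)"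
proof -
  have "(\<exists>n. t < raft_S x r n) \<longleftrightarrow> (\<exists>n. t - min (x 1) r < raft_S (\<lambda>k. x (Suc k)) r n)"
  proof
    assume "\<exists>n. t < raft_S x r n"
    then obtain n where n: "t < raft_S x r n" ..
    with assms obtain j where "n = Suc j"
      by (cases n) auto
    with n show "\<exists>n. t - min (x 1) r < raft_S (\<lambda>k. x (Suc k)) r n"
      by (auto simp: raft_S_Suc_shift algebra_simps)
  next
    assume "\<exists>n. t - min (x 1) r < raft_S (\<lambda>k. x (Suc k)) r n"
    then show "\<exists>n. t < raft_S x r n"
      by (metis raft_S_Suc_shift diff_less_eq add.commute)
  qed
  with assms(1) show ?thesis
    by (simp add: raft_regular_def raft_nonneg_shift[of x])
qed

lemma raft_D_shift:
  assumes "0 \<le> x 1" "0 \<le> r" "min (x 1) r \<le> t"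
    and regular: "raft_regular (\<lambda>k. x (Suc k)) r (t - min (x 1) r)"
  shows "raft_D x r t = of_bool (x 1 \<le> r) + raft_D (\<lambda>k. x (Suc k)) r (t - min (x 1) r)"
proof -
  let ?x = "\<lambda>k. x (Suc k)" and ?t = "t - min (x 1) r"
  have nonneg: "raft_nonneg ?x" "raft_nonneg x"
    using assms(1) regular by (auto simp: raft_regular_def raft_nonneg_shift[of x])
  obtain n where n: "raft_S ?x r n \<le> ?t" "?t < raft_S ?x r (Suc n)"
    using regular assms(3) raft_S_bracket[of ?t ?x r] by (auto simp: raft_regular_def)
  have "raft_N ?x r ?t = n"
    using nonneg n assms(2) by (intro raft_N_eqI) auto
  moreover have "raft_N x r t = Suc n"
    using nonneg n assms(2) by (intro raft_N_eqI) (auto simp: raft_S_Suc_shift[of x])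
  ultimately show ?thesis
    unfolding raft_D_def by (simp only: card_filter_atLeastAtMost_Suc)
qed

lemma raft_event_first_fails:
  assumes "0 \<le> x 1" "x 1 \<le> r" "x 1 \<le> t"
  shows "raft_event x r t l \<longleftrightarrow> l \<noteq> 0 \<and> raft_event (\<lambda>k. x (Suc k)) r (t - x 1) (l - 1)"
  using assms raft_regular_shift[of x r t] raft_D_shift[of x r t]
  by (auto simp: raft_event_def min_absorb1 order.trans[OF assms(1,2)])

lemma raft_event_first_replaced:
  assumes "0 \<le> r" "r < x 1" "r \<le> t"
  shows "raft_event x r t l \<longleftrightarrow> raft_event (\<lambda>k. x (Suc k)) r (t - r) l"
  using assms raft_regular_shift[of x r t] raft_D_shift[of x r t]
  by (auto simp: raft_event_def min_absorb2)

lemma raft_event_first_outlives: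
  assumes "0 \<le> t" "t < x 1" "t < r"
  shows "raft_event x r t l \<longleftrightarrow> raft_nonneg (\<lambda>k. x (Suc k)) \<and> l = 0"
proof (cases "raft_nonneg x")
  case True
  have "raft_N x r t = 0"
    using True assms by (intro raft_N_eqI) (auto simp: raft_S_Suc)
  moreover have "t < raft_S x r 1"
    using assms by (simp add: raft_S_Suc)
  ultimately show ?thesis
    using True by (auto simp: raft_event_def raft_regular_def raft_D_def raft_nonneg_shift[of x])
next
  case False
  with assms show ?thesis
    by (simp add: raft_event_def raft_regular_def raft_nonneg_shift[of x])
qed

lemma Greatest_nat_eq_iff:
  "(GREATEST i::nat. P i) = n \<longleftrightarrow>
    (P n \<and> (\<forall>m. P m \<longrightarrow> m \<le> n))
    \<or> (\<not> (\<exists>j. P j \<and> (\<forall>m. P m \<longrightarrow> m \<le> j)) \<and> n = (GREATEST i::nat. False))"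
proof (cases "\<exists>j. P j \<and> (\<forall>m. P m \<longrightarrow> m \<le> j)")
  case True
  then obtain j where j: "P j" "\<forall>m. P m \<longrightarrow> m \<le> j"
    by blast
  then have "(GREATEST i. P i) = j"
    by (intro Greatest_equality) auto
  with j True show ?thesis
    by (auto intro: antisym)
next
  case False
  then have "(\<lambda>j. P j \<and> (\<forall>m. P m \<longrightarrow> m \<le> j)) = (\<lambda>j. False \<and> (\<forall>m. False \<longrightarrow> m \<le> j))"
    by (intro ext) blast
  then have "(GREATEST i. P i) = (GREATEST i::nat. False)"
    unfolding Greatest_def by simp
  with False show ?thesis
    by auto
qed

lemma measurable_Greatest_nat [measurable]:
  fixes P :: "nat \<Rightarrow> 'a \<Rightarrow> bool"
  assumes [measurable]: "\<And>i. Measurable.pred M (P i)"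
  shows "(\<lambda>x. GREATEST i. P i x) \<in> measurable M (count_space UNIV)"
  unfolding measurable_count_space_eq2_countable
proof safe
  fix n
  have "(\<lambda>x. GREATEST i. P i x) -` {n} \<inter> space M = {x \<in> space M. (GREATEST i. P i x) = n}"
    by blast
  also have "\<dots> \<in> sets M"
    unfolding Greatest_nat_eq_iff by measurable
  finally show "(\<lambda>x. GREATEST i. P i x) -` {n} \<inter> space M \<in> sets M" .
qed simp

context
  fixes M :: "'a measure" and x :: "'a \<Rightarrow> nat \<Rightarrow> real"
  assumes measurable_path [measurable]: "\<And>k. (\<lambda>\<omega>. x \<omega> k) \<in> borel_measurable M"
begin

lemma measurable_raft_D [measurable]:
  "(\<lambda>\<omega>. raft_D (x \<omega>) r t) \<in> measurable M (count_space UNIV)"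
  unfolding raft_D_def
proof (rule measurable_compose_countable[where f = "\<lambda>n \<omega>. card {k \<in> {1..n}. x \<omega> k \<le> r}"])
  show "(\<lambda>\<omega>. raft_N (x \<omega>) r t) \<in> measurable M (count_space UNIV)"
    unfolding raft_N_def raft_Y_def by measurable
qed measurable

lemma pred_raft_nonneg [measurable]: "Measurable.pred M (\<lambda>\<omega>. raft_nonneg (x \<omega>))"
  unfolding raft_nonneg_def by measurable

lemma pred_raft_regular [measurable]: "Measurable.pred M (\<lambda>\<omega>. raft_regular (x \<omega>) r t)"
  unfolding raft_regular_def raft_S_def raft_Y_def by measurable

end

definition poisson_prob :: "real \<Rightarrow> real \<Rightarrow> nat \<Rightarrow> real" where
  "poisson_prob lam t l = exp (- lam * t) * (lam * t) ^ l / fact l"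

lemma poisson_prob_nonneg: "0 \<le> lam \<Longrightarrow> 0 \<le> t \<Longrightarrow> 0 \<le> poisson_prob lam t l"
  by (simp add: poisson_prob_def)

lemma poisson_prob_at_0: "poisson_prob lam 0 l = of_bool (l = 0)"
  by (simp add: poisson_prob_def)

lemma poisson_prob_sums: "(\<lambda>l. poisson_prob lam t l) sums 1"
proof -
  have "(\<lambda>l. exp (- lam * t) * ((lam * t) ^ l /\<^sub>R fact l)) sums (exp (- lam * t) * exp (lam * t))"
    by (intro sums_mult exp_converges)
  moreover have "exp (- lam * t) * ((lam * t) ^ l /\<^sub>R fact l) = poisson_prob lam t l" for l
    by (simp add: poisson_prob_def field_simps)
  ultimately show ?thesis
    by (simp flip: exp_add)
qed

lemma poisson_prob_memoryless:
  "exp (- lam * m) * poisson_prob lam (t - m) l = exp (- lam * t) * (lam * (t - m)) ^ l / fact l"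
  by (simp add: poisson_prob_def flip: exp_add) (simp add: algebra_simps)

lemma poisson_prob_memoryless_le:
  assumes "0 \<le> lam" "0 \<le> m" "m \<le> t"
  shows "exp (- lam * m) * poisson_prob lam (t - m) l \<le> poisson_prob lam t l"
  unfolding poisson_prob_memoryless unfolding poisson_prob_def
  using assms by (auto intro!: divide_right_mono mult_left_mono power_mono)

lemma nn_integral_exponential_tail:
  assumes "0 < lam" "0 \<le> m"
  shows "(\<integral>\<^sup>+a. ennreal (exponential_density lam a) * indicator {m..} a \<partial>lborel) = exp (- lam * m)"
proof -
  have "(\<integral>\<^sup>+a. ennreal (exponential_density lam a) * indicator {m..} a \<partial>lborel)
      = (\<integral>\<^sup>+a. ennreal (lam * exp (- a * lam)) * indicator {m..} a \<partial>lborel)"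
    using assms by (intro nn_integral_cong) (auto simp: exponential_density_def split: split_indicator)
  also have "\<dots> = ennreal (0 - (- exp (- m * lam)))"
  proof (rule nn_integral_FTC_atLeast)
    fix a :: real
    show "((\<lambda>a. - exp (- a * lam)) has_real_derivative lam * exp (- a * lam)) (at a)"
      by (auto intro!: derivative_eq_intros)
    show "0 \<le> lam * exp (- a * lam)"
      using assms by simp
  next
    have "filterlim (\<lambda>a. a * lam) at_top at_top"
      using assms by (intro filterlim_at_top_mult_tendsto_pos[OF tendsto_const] filterlim_ident)
    then have "filterlim (\<lambda>a. - a * lam) at_bot at_top"
      by (simp add: filterlim_uminus_at_bot)
    then show "((\<lambda>a. - exp (- a * lam)) \<longlongrightarrow> 0) at_top"
      using filterlim_compose[OF exp_at_bot] tendsto_minus by fastforce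
  qed simp
  finally show ?thesis
    by (simp add: mult.commute)
qed

lemma nn_integral_exponential_poisson:
  assumes "0 < lam" "0 \<le> m" "m \<le> t"
  shows "(\<integral>\<^sup>+a. ennreal (exponential_density lam a * poisson_prob lam (t - a) l) * indicator {0..m} a \<partial>lborel)
       = poisson_prob lam t (Suc l) - exp (- lam * m) * poisson_prob lam (t - m) (Suc l)"
proof -
  define c where "c = exp (- lam * t) / fact (Suc l)"
  define F where "F a = - c * (lam * (t - a)) ^ Suc l" for a
  have "(\<integral>\<^sup>+a. ennreal (exponential_density lam a * poisson_prob lam (t - a) l) * indicator {0..m} a \<partial>lborel)
      = F m - F 0"
  proof (rule nn_integral_FTC_Icc)
    fix a :: real
    assume a: "a \<in> {0..m}"
    show "0 \<le> exponential_density lam a * poisson_prob lam (t - a) l"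
      using assms a by (auto simp: exponential_density_def intro!: mult_nonneg_nonneg poisson_prob_nonneg)
    have deriv: "(F has_real_derivative - c * ((1 + of_nat l) * (- lam * (lam * (t - a)) ^ l))) (at a)"
      unfolding F_def by (intro DERIV_cmult DERIV_power_Suc derivative_eq_intros) auto
    have deriv_eq: "- c * ((1 + of_nat l) * (- lam * (lam * (t - a)) ^ l))
        = lam * exp (- lam * a) * poisson_prob lam (t - a) l"
    proof -
      have "- c * ((1 + of_nat l) * (- lam * (lam * (t - a)) ^ l))
          = c * (1 + of_nat l) * (lam * (lam * (t - a)) ^ l)"
        by (simp add: mult_ac)
      also have "c * (1 + of_nat l) = exp (- lam * t) / fact l"
        by (simp add: c_def fact_Suc)
      finally show ?thesis
        unfolding mult.assoc poisson_prob_memoryless by simp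
    qed
    have density: "exponential_density lam a = lam * exp (- lam * a)"
      using a by (simp add: exponential_density_def mult.commute)
    show "(F has_real_derivative exponential_density lam a * poisson_prob lam (t - a) l) (at a)"
      using deriv unfolding deriv_eq density .
  qed (use assms in \<open>auto simp: poisson_prob_def\<close>)
  also have "F m - F 0 = poisson_prob lam t (Suc l) - exp (- lam * m) * poisson_prob lam (t - m) (Suc l)"
    unfolding F_def c_def poisson_prob_memoryless by (simp add: poisson_prob_def)
  finally show ?thesis .
qed

lemma nn_integral_poisson_renewal:
  fixes h :: "real \<Rightarrow> ennreal"
  assumes "0 < lam" "0 \<le> m" "m \<le> t"
    and h_before: "\<And>a. 0 \<le> a \<Longrightarrow> a < m \<Longrightarrow>
      h a = (if l = 0 then 0 else ennreal (poisson_prob lam (t - a) (l - 1)))"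
    and h_after: "\<And>a. m < a \<Longrightarrow> h a = poisson_prob lam (t - m) l"
  shows "(\<integral>\<^sup>+a. ennreal (exponential_density lam a) * h a \<partial>lborel) = poisson_prob lam t l"
proof -
  let ?c = "poisson_prob lam (t - m) l"
  define g where "g a = (if l = 0 then 0 else exponential_density lam a * poisson_prob lam (t - a) (l - 1))" for a
  have "AE a in lborel. ennreal (exponential_density lam a) * h a
      = ennreal (g a) * indicator {0..m} a + ?c * (ennreal (exponential_density lam a) * indicator {m..} a)"
    using AE_lborel_singleton[of m]
  proof eventually_elim
    case (elim a)
    consider "a < 0" | "0 \<le> a" "a < m" | "m < a"
      using elim by linarith
    then show ?case
    proof cases
      case 1
      with assms show ?thesis
        by (simp add: exponential_density_def g_def)
    next
      case 2
      with assms h_before[of a] show ?thesis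
        by (simp add: exponential_density_def g_def ennreal_mult')
    qed (use assms h_after[of a] in \<open>simp add: mult.commute\<close>)
  qed
  then have "(\<integral>\<^sup>+a. ennreal (exponential_density lam a) * h a \<partial>lborel)
      = (\<integral>\<^sup>+a. ennreal (g a) * indicator {0..m} a
          + ?c * (ennreal (exponential_density lam a) * indicator {m..} a) \<partial>lborel)"
    by (rule nn_integral_cong_AE)
  also have "\<dots> = (\<integral>\<^sup>+a. ennreal (g a) * indicator {0..m} a \<partial>lborel)
        + ?c * (\<integral>\<^sup>+a. ennreal (exponential_density lam a) * indicator {m..} a \<partial>lborel)"
    unfolding g_def poisson_prob_def exponential_density_def
    by (subst nn_integral_add) (auto intro!: nn_integral_cmult)
  also have "(\<integral>\<^sup>+a. ennreal (g a) * indicator {0..m} a \<partial>lborel)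
      = poisson_prob lam t l - exp (- lam * m) * ?c"
  proof (cases l)
    case 0
    then show ?thesis
      unfolding poisson_prob_memoryless by (simp add: g_def poisson_prob_def)
  next
    case (Suc k)
    then show ?thesis
      using nn_integral_exponential_poisson[OF assms(1-3), of k] by (simp add: g_def)
  qed
  also have "(\<integral>\<^sup>+a. ennreal (exponential_density lam a) * indicator {m..} a \<partial>lborel) = exp (- lam * m)"
    using assms by (simp add: nn_integral_exponential_tail)
  also have "ennreal (poisson_prob lam t l - exp (- lam * m) * ?c) + ?c * ennreal (exp (- lam * m))
      = poisson_prob lam t l"
    using assms poisson_prob_memoryless_le[of lam m t l] poisson_prob_nonneg[of lam "t - m" l]
    by (simp add: mult.commute flip: ennreal_mult ennreal_plus)
  finally show ?thesis .
qed

text \<open>Paths are indexed from 1, as in raft_D; the value at index 0 is never used.\<close>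
definition stream_path :: "'a stream \<Rightarrow> nat \<Rightarrow> 'a" where
  "stream_path s k = s !! (k - 1)"

lemma stream_path_Cons_1 [simp]: "stream_path (a ## s) 1 = a"
  by (simp add: stream_path_def)

lemma stream_path_Cons_Suc: "1 \<le> k \<Longrightarrow> stream_path (a ## s) (Suc k) = stream_path s k"
  by (cases k) (simp_all add: stream_path_def)

lemma raft_event_stream_path_Cons:
  "raft_event (\<lambda>k. stream_path (a ## s) (Suc k)) r t l = raft_event (stream_path s) r t l"
  by (rule raft_event_cong) (simp add: stream_path_Cons_Suc)

lemma raft_nonneg_stream_path_Cons:
  "raft_nonneg (\<lambda>k. stream_path (a ## s) (Suc k)) = raft_nonneg (stream_path s)"
  by (simp add: raft_nonneg_def stream_path_Cons_Suc)

locale raft_exponential =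
  fixes lam r :: real
  assumes lam_pos: "0 < lam" and r_pos: "0 < r"
begin

definition lifetime :: "real measure" where
  "lifetime = density lborel (\<lambda>a. ennreal (exponential_density lam a))"

abbreviation paths :: "real stream measure" where
  "paths \<equiv> stream_space lifetime"

definition raft_set :: "nat \<Rightarrow> real \<Rightarrow> real stream set" where
  "raft_set l t = {s \<in> space paths. raft_event (stream_path s) r t l}"

lemma sets_lifetime: "sets lifetime = sets borel"
  by (simp add: lifetime_def)

sublocale lifetime: prob_space lifetime
  unfolding lifetime_def using lam_pos by (rule prob_space_exponential_density)

sublocale paths: prob_space paths
  by (rule lifetime.prob_space_stream_space)

lemma space_paths: "space paths = UNIV"
  by (simp add: space_stream_space lifetime_def)

lemma measurable_stream_path: "(\<lambda>s. stream_path s k) \<in> borel_measurable paths"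
  using measurable_snth[of "k - 1" lifetime]
  unfolding stream_path_def measurable_cong_sets[OF refl sets_lifetime] .

lemma pred_raft_nonneg_paths [measurable]: "Measurable.pred paths (\<lambda>s. raft_nonneg (stream_path s))"
  by (rule pred_raft_nonneg[OF measurable_stream_path])

lemma pred_raft_regular_paths [measurable]: "Measurable.pred paths (\<lambda>s. raft_regular (stream_path s) r t)"
  by (rule pred_raft_regular[OF measurable_stream_path])

lemma pred_raft_D_paths [measurable]: "Measurable.pred paths (\<lambda>s. raft_D (stream_path s) r t = l)"
  using measurable_raft_D[OF measurable_stream_path] by measurable

lemma sets_raft_set [measurable]: "raft_set l t \<in> sets paths"
  unfolding raft_set_def raft_event_def by measurable

lemma emeasure_raft_nonneg: "emeasure paths {s \<in> space paths. raft_nonneg (stream_path s)} = 1"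
proof (rule paths.emeasure_eq_1_AE)
  have "AE a in lifetime. 0 \<le> a"
    unfolding lifetime_def by (subst AE_density) (auto simp: exponential_density_def)
  then have "AE s in paths. stream_all (\<lambda>a. 0 \<le> a) s"
    by (intro lifetime.AE_stream_all) (auto simp: measurable_cong_sets[OF sets_lifetime refl])
  then show "AE s in paths. s \<in> {s \<in> space paths. raft_nonneg (stream_path s)}"
    by eventually_elim (auto simp: stream_all_def raft_nonneg_def stream_path_def space_paths)
qed measurable

lemma raft_set_section_fails:
  assumes "0 \<le> a" "a < min t r"
  shows "{s \<in> space paths. a ## s \<in> raft_set l t} = (if l = 0 then {} else raft_set (l - 1) (t - a))"
  using assms raft_event_first_fails[of "stream_path (a ## s)" r t l for s,
      unfolded stream_path_Cons_1 raft_event_stream_path_Cons]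
  by (auto simp: raft_set_def space_paths)

lemma raft_set_section_outlives:
  assumes "0 \<le> t" "t < r" "t < a"
  shows "{s \<in> space paths. a ## s \<in> raft_set l t}
    = (if l = 0 then {s \<in> space paths. raft_nonneg (stream_path s)} else {})"
  using assms raft_event_first_outlives[of t "stream_path (a ## s)" r l for s,
      unfolded stream_path_Cons_1 raft_nonneg_stream_path_Cons]
  by (auto simp: raft_set_def space_paths)

lemma raft_set_section_replaced:
  assumes "r \<le> t" "r < a"
  shows "{s \<in> space paths. a ## s \<in> raft_set l t} = raft_set l (t - r)"
  using assms r_pos raft_event_first_replaced[of r "stream_path (a ## s)" t l for s,
      unfolded stream_path_Cons_1 raft_event_stream_path_Cons]
  by (auto simp: raft_set_def space_paths)

lemma emeasure_paths_first_step:
  assumes "A \<in> sets paths" "h \<in> borel_measurable borel"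
    and "AE a in lborel. 0 \<le> a \<longrightarrow> emeasure paths {s \<in> space paths. a ## s \<in> A} = h a"
  shows "emeasure paths A = (\<integral>\<^sup>+a. ennreal (exponential_density lam a) * h a \<partial>lborel)"
proof -
  have "emeasure paths A = (\<integral>\<^sup>+a. emeasure paths {s \<in> space paths. a ## s \<in> A} \<partial>lifetime)"
    by (rule lifetime.emeasure_stream_space) fact
  also have "\<dots> = (\<integral>\<^sup>+a. h a \<partial>lifetime)"
    using assms(3) unfolding lifetime_def
    by (intro nn_integral_cong_AE) (auto simp: AE_density exponential_density_def elim!: eventually_mono)
  also have "\<dots> = (\<integral>\<^sup>+a. ennreal (exponential_density lam a) * h a \<partial>lborel)"
    unfolding lifetime_def using assms(2) by (intro nn_integral_density) auto
  finally show ?thesis .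
qed

lemma emeasure_raft_set_eq_poissonI:
  assumes "0 \<le> t"
    and fewer_failures: "l \<noteq> 0 \<Longrightarrow> \<forall>t' \<ge> 0. emeasure paths (raft_set (l - 1) t') = poisson_prob lam t' (l - 1)"
    and earlier_horizon: "r \<le> t \<Longrightarrow> emeasure paths (raft_set l (t - r)) = poisson_prob lam (t - r) l"
  shows "emeasure paths (raft_set l t) = poisson_prob lam t l"
proof -
  define m where "m = min t r"
  define h where "h a = (if a < m then (if l = 0 then 0 else ennreal (poisson_prob lam (t - a) (l - 1)))
    else ennreal (poisson_prob lam (t - m) l))" for a
  have "emeasure paths (raft_set l t) = (\<integral>\<^sup>+a. ennreal (exponential_density lam a) * h a \<partial>lborel)"
  proof (rule emeasure_paths_first_step)
    show "h \<in> borel_measurable borel"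
      unfolding h_def poisson_prob_def by measurable
    have slice: "emeasure paths {s \<in> space paths. a ## s \<in> raft_set l t} = h a"
      if "0 \<le> a" "a \<noteq> m" for a
      using that assms emeasure_raft_nonneg raft_set_section_fails[of a t l]
        raft_set_section_outlives[of t a l] raft_set_section_replaced[of t a l]
      by (cases "a < m"; cases "t < r") (auto simp: h_def m_def poisson_prob_at_0)
    show "AE a in lborel. 0 \<le> a \<longrightarrow> emeasure paths {s \<in> space paths. a ## s \<in> raft_set l t} = h a"
      using AE_lborel_singleton[of m] by eventually_elim (auto intro: slice)
  qed simp
  also have "\<dots> = poisson_prob lam t l"
    using assms(1) r_pos
    by (intro nn_integral_poisson_renewal[OF lam_pos, where h = h and m = m]) (auto simp: h_def m_def)
  finally show ?thesis .
qed

lemma emeasure_raft_set: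
  assumes "0 \<le> t"
  shows "emeasure paths (raft_set l t) = poisson_prob lam t l"
  using assms
proof (induction l arbitrary: t rule: less_induct)
  case (less l)
  obtain n where "t < real n * r"
    using ex_less_of_nat_mult[OF r_pos] by blast
  with less.prems show ?case
  proof (induction n arbitrary: t)
    case (Suc n)
    show ?case
    proof (rule emeasure_raft_set_eq_poissonI)
      show "r \<le> t \<Longrightarrow> emeasure paths (raft_set l (t - r)) = poisson_prob lam (t - r) l"
        using Suc by (auto simp: algebra_simps)
    qed (use less Suc.prems in auto)
  qed simp
qed

lemma emeasure_raft_regular:
  assumes "0 \<le> t"
  shows "emeasure paths {s \<in> space paths. raft_regular (stream_path s) r t} = 1"
proof -
  have "emeasure paths {s \<in> space paths. raft_regular (stream_path s) r t} = emeasure paths (\<Union>l. raft_set l t)"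
    by (rule arg_cong[where f = "emeasure paths"]) (auto simp: raft_set_def raft_event_def)
  also have "\<dots> = (\<Sum>l. emeasure paths (raft_set l t))"
    by (rule suminf_emeasure[symmetric]) (auto simp: disjoint_family_on_def raft_set_def raft_event_def)
  also have "\<dots> = (\<Sum>l. ennreal (poisson_prob lam t l))"
    using emeasure_raft_set[OF assms] by simp
  also have "\<dots> = 1"
    using poisson_prob_sums[of lam t] lam_pos assms
    by (subst suminf_ennreal2) (auto simp: poisson_prob_nonneg sums_iff)
  finally show ?thesis .
qed

lemma emeasure_raft_D:
  assumes "0 \<le> t"
  shows "emeasure paths {s \<in> space paths. raft_D (stream_path s) r t = l} = poisson_prob lam t l"
proof -
  have "AE s in paths. raft_regular (stream_path s) r t"
    using emeasure_raft_regular[OF assms] by (intro paths.AE_I_eq_1) (auto simp: paths.emeasure_space_1)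
  then have "emeasure paths {s \<in> space paths. raft_D (stream_path s) r t = l} = emeasure paths (raft_set l t)"
    by (intro emeasure_eq_AE) (auto simp: raft_set_def raft_event_def elim: eventually_mono)
  with emeasure_raft_set[OF assms] show ?thesis
    by simp
qed

end

lemma (in prob_space) iid_to_stream:
  fixes X :: "nat \<Rightarrow> 'a \<Rightarrow> 'b::topological_space"
  assumes "prob_space E" "sets E = sets borel"
    and "indep_vars (\<lambda>_. borel) X {1..}"
    and "\<And>k. 1 \<le> k \<Longrightarrow> distr M borel (X k) = E"
  shows "(\<lambda>\<omega>. to_stream (\<lambda>n. X (Suc n) \<omega>)) \<in> measurable M (stream_space E)"
    and "distr M (stream_space E) (\<lambda>\<omega>. to_stream (\<lambda>n. X (Suc n) \<omega>)) = stream_space E"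
proof -
  have measurable_E: "measurable N E = measurable N borel" for N :: "'c measure"
    by (rule measurable_cong_sets[OF refl assms(2)])
  have X [measurable]: "X k \<in> measurable M E" if "k \<in> {1..}" for k
    using assms(3) that unfolding measurable_E by (auto simp: indep_vars_def)
  define restr where "restr \<omega> = (\<lambda>i\<in>{1::nat..}. X i \<omega>)" for \<omega>
  define shift where "shift \<omega> = (\<lambda>n\<in>UNIV. \<omega> (Suc n))" for \<omega> :: "nat \<Rightarrow> 'b"
  have restr_measurable: "restr \<in> measurable M (\<Pi>\<^sub>M i\<in>{1..}. E)"
    unfolding restr_def by (rule measurable_restrict) (rule X)
  have shift_measurable: "shift \<in> measurable (\<Pi>\<^sub>M i\<in>{1..}. E) (\<Pi>\<^sub>M i\<in>UNIV. E)"
    unfolding shift_def by (rule measurable_restrict) (auto intro!: measurable_component_singleton)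
  have "distr M (\<Pi>\<^sub>M i\<in>{1::nat..}. E) restr = distr M (\<Pi>\<^sub>M i\<in>{1::nat..}. borel) restr"
    using assms(2) by (intro distr_cong) (auto intro!: sets_PiM_cong)
  also have "\<dots> = (\<Pi>\<^sub>M i\<in>{1..}. distr M borel (X i))"
    unfolding restr_def
    using assms(3) X unfolding measurable_E by (intro indep_vars_iff_distr_eq_PiM'[THEN iffD1]) auto
  also have "\<dots> = (\<Pi>\<^sub>M i\<in>{1..}. E)"
    using assms(4) by (intro PiM_cong) auto
  finally have restr_distr: "distr M (\<Pi>\<^sub>M i\<in>{1::nat..}. E) restr = (\<Pi>\<^sub>M i\<in>{1..}. E)" .
  have shift_distr: "distr (\<Pi>\<^sub>M i\<in>{1::nat..}. E) (\<Pi>\<^sub>M i\<in>UNIV. E) shift = (\<Pi>\<^sub>M i\<in>UNIV. E)"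
    unfolding shift_def using distr_PiM_reindex[of "{1::nat..}" "\<lambda>_. E" Suc UNIV] assms(1) by auto
  have factor: "(\<lambda>\<omega>. to_stream (\<lambda>n. X (Suc n) \<omega>)) = to_stream \<circ> shift \<circ> restr"
    by (simp add: fun_eq_iff restr_def shift_def restrict_UNIV)
  then show "(\<lambda>\<omega>. to_stream (\<lambda>n. X (Suc n) \<omega>)) \<in> measurable M (stream_space E)"
    using restr_measurable shift_measurable measurable_to_stream by (simp add: measurable_comp)
  from factor have "distr M (stream_space E) (\<lambda>\<omega>. to_stream (\<lambda>n. X (Suc n) \<omega>))
      = distr (distr (distr M (\<Pi>\<^sub>M i\<in>{1..}. E) restr) (\<Pi>\<^sub>M i\<in>UNIV. E) shift) (stream_space E) to_stream"
    using restr_measurable shift_measurable measurable_to_stream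
    by (simp add: distr_distr measurable_comp comp_assoc)
  also have "\<dots> = stream_space E"
    using restr_distr shift_distr stream_space_eq_distr[of E] by simp
  finally show "distr M (stream_space E) (\<lambda>\<omega>. to_stream (\<lambda>n. X (Suc n) \<omega>)) = stream_space E" .
qed

theorem corollary1:
  fixes M :: "'a measure" and X :: "nat \<Rightarrow> 'a \<Rightarrow> real"
    and lam r t :: real and l :: nat
  assumes "prob_space M"
    and "prob_space.indep_vars M (\<lambda>_. borel) X {1..}"
    and "\<And>k. k \<ge> 1 \<Longrightarrow> distributed M lborel (X k) (exponential_density lam)"
    and "lam > 0" and "r > 0" and "t > 0"
  shows "measure M {\<omega> \<in> space M. raft_D (\<lambda>k. X k \<omega>) r t = l}
           = exp (- lam * t) * (lam * t) ^ l / fact l"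
proof -
  interpret M: prob_space M by fact
  interpret raft_exponential lam r
    using assms by unfold_locales
  define g where "g \<omega> = to_stream (\<lambda>n. X (Suc n) \<omega>)" for \<omega>
  have "distr M borel (X k) = lifetime" if "1 \<le> k" for k
    using distributed_distr_eq_density[OF assms(3)[OF that]]
    by (simp add: lifetime_def cong: distr_cong)
  then have g: "g \<in> measurable M paths" "distr M paths g = paths"
    unfolding g_def using M.iid_to_stream[OF lifetime.prob_space_axioms sets_lifetime assms(2)] by auto
  have "raft_D (\<lambda>k. X k \<omega>) r t = raft_D (stream_path (g \<omega>)) r t" for \<omega>
    by (rule raft_D_cong) (auto simp: g_def stream_path_def to_stream_def)
  then have "{\<omega> \<in> space M. raft_D (\<lambda>k. X k \<omega>) r t = l}
      = g -` {s \<in> space paths. raft_D (stream_path s) r t = l} \<inter> space M"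
    by (auto simp: space_paths)
  then have "measure M {\<omega> \<in> space M. raft_D (\<lambda>k. X k \<omega>) r t = l}
      = measure paths {s \<in> space paths. raft_D (stream_path s) r t = l}"
    using measure_distr[OF g(1)] g(2) by simp
  also have "\<dots> = poisson_prob lam t l"
    using emeasure_raft_D[of t l] assms(6) lam_pos by (simp add: measure_def poisson_prob_nonneg)
  finally show ?thesis
    by (simp add: poisson_prob_def)
qed

end
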